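(* Let $G$ be a finite, simple, connected graph of order $n\ge 2$. Then $\dim_{wt}(G)=n$ if and only if every vertex of $G$ is a twin.
   Context: $d(x,y)$ is the shortest-path distance and $N(x)$ the set of neighbors of $x$. A set $W\subseteq V(G)$ is a resolving set if for every two distinct vertices $y,z$ there is $x\in W$ with $d(y,x)\ne d(z,x)$. A set $W$ is a weak total resolving set (WTR-set) if $W$ is resolving and, for every $w\in W$ and every $x\in V(G)\setminus W$, there is $w'\in W\setminus\{w\}$ with $d(x,w')\ne d(w,w')$. $\dim_{wt}(G)$ is the minimum cardinality of a WTR-set. Two distinct vertices $u,v$ are twins if $N(u)\setminus\{v\}=N(v)\setminus\{u\}$; a vertex $u$ is a twin if there exists $v\ne u$ such that $u,v$ are twins. *)

theory Defs
  imports Main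
begin

definition simple_graph :: "'a set \<Rightarrow> ('a \<Rightarrow> 'a \<Rightarrow> bool) \<Rightarrow> bool" where
  "simple_graph V E \<longleftrightarrow> finite V \<and> (\<forall>x y. E x y \<longrightarrow> x \<in> V \<and> y \<in> V)
     \<and> (\<forall>x y. E x y \<longrightarrow> E y x) \<and> (\<forall>x. \<not> E x x)"

definition walk :: "('a \<Rightarrow> 'a \<Rightarrow> bool) \<Rightarrow> 'a list \<Rightarrow> 'a \<Rightarrow> 'a \<Rightarrow> bool" where
  "walk E xs x y \<longleftrightarrow> xs \<noteq> [] \<and> hd xs = x \<and> last xs = y
     \<and> (\<forall>i. Suc i < length xs \<longrightarrow> E (xs ! i) (xs ! Suc i))"

definition connected_graph :: "'a set \<Rightarrow> ('a \<Rightarrow> 'a \<Rightarrow> bool) \<Rightarrow> bool" where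
  "connected_graph V E \<longleftrightarrow> (\<forall>x\<in>V. \<forall>y\<in>V. \<exists>xs. walk E xs x y)"

definition dist :: "('a \<Rightarrow> 'a \<Rightarrow> bool) \<Rightarrow> 'a \<Rightarrow> 'a \<Rightarrow> nat" where
  "dist E x y = (LEAST k. \<exists>xs. walk E xs x y \<and> length xs = Suc k)"

definition nbhd :: "('a \<Rightarrow> 'a \<Rightarrow> bool) \<Rightarrow> 'a \<Rightarrow> 'a set" where
  "nbhd E x = {y. E x y}"

definition resolving :: "'a set \<Rightarrow> ('a \<Rightarrow> 'a \<Rightarrow> bool) \<Rightarrow> 'a set \<Rightarrow> bool" where
  "resolving V E W \<longleftrightarrow> W \<subseteq> V \<and>
     (\<forall>y\<in>V. \<forall>z\<in>V. y \<noteq> z \<longrightarrow> (\<exists>x\<in>W. dist E y x \<noteq> dist E z x))"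

definition wtr_set :: "'a set \<Rightarrow> ('a \<Rightarrow> 'a \<Rightarrow> bool) \<Rightarrow> 'a set \<Rightarrow> bool" where
  "wtr_set V E W \<longleftrightarrow> resolving V E W \<and>
     (\<forall>w\<in>W. \<forall>x\<in>V - W. \<exists>w'\<in>W - {w}. dist E x w' \<noteq> dist E w w')"

definition wt_dim :: "'a set \<Rightarrow> ('a \<Rightarrow> 'a \<Rightarrow> bool) \<Rightarrow> nat" where
  "wt_dim V E = (LEAST k. \<exists>W. wtr_set V E W \<and> card W = k)"

definition twins :: "('a \<Rightarrow> 'a \<Rightarrow> bool) \<Rightarrow> 'a \<Rightarrow> 'a \<Rightarrow> bool" where
  "twins E u v \<longleftrightarrow> u \<noteq> v \<and> nbhd E u - {v} = nbhd E v - {u}"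

definition is_twin :: "'a set \<Rightarrow> ('a \<Rightarrow> 'a \<Rightarrow> bool) \<Rightarrow> 'a \<Rightarrow> bool" where
  "is_twin V E u \<longleftrightarrow> (\<exists>v\<in>V. twins E u v)"

end

theory Submission
  imports Defs
begin

text \<open>
  Twins x, v have the same distance to every third vertex, since a shortest walk leaving one of
  them can be rerouted through the other. Hence a WTR-set cannot omit a twin x: if its twin v is
  in the set, x and v are not separated with respect to v; otherwise x and v are not resolved at
  all. Conversely, if u is not a twin, then V - {u} is a WTR-set: it resolves V because every
  pair of vertices contains a member of it, and for w \<noteq> u some third vertex has different
  distances to u and w, since otherwise u and w would have the same neighbours besides each other.
\<close>

lemma walk_Cons_Cons:
  "walk E (a # b # ys) x y \<longleftrightarrow> a = x \<and> E a b \<and> walk E (b # ys) b y"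
proof -
  let ?step = "\<lambda>zs i. Suc i < length zs \<longrightarrow> E (zs ! i) (zs ! Suc i)"
  have "(\<forall>i. ?step (a # b # ys) i) \<longleftrightarrow> E a b \<and> (\<forall>i. ?step (b # ys) i)"
  proof (intro iffI conjI allI)
    fix i assume "\<forall>i. ?step (a # b # ys) i"
    then show "E a b" and "?step (b # ys) i"
      by (auto dest: spec[of _ 0] spec[of _ "Suc i"])
  next
    fix i assume "E a b \<and> (\<forall>i. ?step (b # ys) i)"
    then show "?step (a # b # ys) i"
      by (cases i) auto
  qed
  then show ?thesis
    unfolding walk_def by auto
qed

lemma walk_singleton: "walk E [a] x y \<longleftrightarrow> a = x \<and> a = y"
  unfolding walk_def by auto

lemma walk_twin_shortcut:
  assumes "simple_graph V E" and "twins E x v" and "walk E xs x w" and "w \<noteq> x" and "w \<noteq> v"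
  shows "\<exists>ys. walk E ys v w \<and> length ys \<le> length xs"
proof -
  obtain zs' where "xs = x # zs'"
    using assms(3) unfolding walk_def by (cases xs) auto
  then obtain b zs where xs: "xs = x # b # zs"
    using assms(3,4) by (cases zs') (auto simp: walk_singleton)
  then have "E x b" and tail: "walk E (b # zs) b w"
    using assms(3) by (simp_all add: walk_Cons_Cons)
  show ?thesis
  proof (cases "b = v")
    case True
    then show ?thesis
      using tail xs by (intro exI[of _ "b # zs"]) simp
  next
    case False
    have "b \<noteq> x"
      using \<open>E x b\<close> assms(1) unfolding simple_graph_def by auto
    then have "E v b"
      using \<open>E x b\<close> False assms(2) unfolding twins_def nbhd_def by blast
    then show ?thesis
      using tail xs by (intro exI[of _ "v # b # zs"]) (simp add: walk_Cons_Cons)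
  qed
qed

lemma dist_le_walk: "walk E xs x y \<Longrightarrow> dist E x y \<le> length xs - 1"
  unfolding dist_def by (rule Least_le) (rule exI[of _ xs], auto simp: walk_def)

lemma shortest_walk_exists:
  assumes "connected_graph V E" and "x \<in> V" and "y \<in> V"
  shows "\<exists>xs. walk E xs x y \<and> length xs = Suc (dist E x y)"
proof -
  obtain xs where "walk E xs x y"
    using assms unfolding connected_graph_def by blast
  then have "\<exists>k xs. walk E xs x y \<and> length xs = Suc k"
    by (intro exI[of _ "length xs - 1"] exI[of _ xs]) (auto simp: walk_def)
  then show ?thesis
    unfolding dist_def by (rule LeastI_ex)
qed

lemma dist_eq_0_iff:
  assumes "connected_graph V E" and "x \<in> V" and "y \<in> V"
  shows "dist E x y = 0 \<longleftrightarrow> x = y"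
proof
  assume "dist E x y = 0"
  then obtain a where "walk E [a] x y"
    using shortest_walk_exists[OF assms] by (auto simp: length_Suc_conv)
  then show "x = y"
    by (auto simp: walk_singleton)
next
  assume "x = y"
  then show "dist E x y = 0"
    using dist_le_walk[of E "[x]" x x] by (simp add: walk_singleton)
qed

lemma dist_eq_1_iff:
  assumes "simple_graph V E" and "connected_graph V E" and "x \<in> V" and "y \<in> V"
  shows "dist E x y = 1 \<longleftrightarrow> E x y"
proof
  assume "dist E x y = 1"
  then obtain a b where "walk E [a, b] x y"
    using shortest_walk_exists[OF assms(2-4)] by (auto simp: length_Suc_conv)
  then show "E x y"
    by (auto simp: walk_Cons_Cons walk_singleton)
next
  assume "E x y"
  then have "dist E x y \<le> 1"
    using dist_le_walk[of E "[x, y]" x y] by (simp add: walk_Cons_Cons walk_singleton)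
  moreover have "x \<noteq> y"
    using \<open>E x y\<close> assms(1) unfolding simple_graph_def by auto
  ultimately show "dist E x y = 1"
    using dist_eq_0_iff[OF assms(2-4)] by linarith
qed

lemma twins_sym: "twins E x v \<Longrightarrow> twins E v x"
  unfolding twins_def by auto

lemma twins_dist_le:
  assumes "simple_graph V E" and "connected_graph V E" and "x \<in> V" and "w \<in> V"
    and "twins E x v" and "w \<noteq> x" and "w \<noteq> v"
  shows "dist E v w \<le> dist E x w"
proof -
  obtain xs where "walk E xs x w" and "length xs = Suc (dist E x w)"
    using shortest_walk_exists[OF assms(2-4)] by auto
  moreover obtain ys where "walk E ys v w" and "length ys \<le> length xs"
    using walk_twin_shortcut[OF assms(1,5) \<open>walk E xs x w\<close> assms(6,7)] by blast
  ultimately show ?thesis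
    using dist_le_walk[of E ys v w] by simp
qed

lemma twins_dist_eq:
  assumes "simple_graph V E" and "connected_graph V E" and "x \<in> V" and "v \<in> V" and "w \<in> V"
    and "twins E x v" and "w \<noteq> x" and "w \<noteq> v"
  shows "dist E x w = dist E v w"
  using twins_dist_le[OF assms(1,2,3,5,6,7,8)]
    twins_dist_le[OF assms(1,2,4,5) twins_sym[OF assms(6)] assms(8,7)] by simp

lemma twins_if_same_dist:
  assumes "simple_graph V E" and "connected_graph V E" and "u \<in> V" and "w \<in> V" and "u \<noteq> w"
    and same: "\<And>y. y \<in> V \<Longrightarrow> y \<noteq> u \<Longrightarrow> y \<noteq> w \<Longrightarrow> dist E u y = dist E w y"
  shows "twins E u w"
proof -
  have "E u y \<longleftrightarrow> E w y" if "y \<noteq> u" and "y \<noteq> w" for y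
  proof (cases "y \<in> V")
    case True
    then show ?thesis
      using same[OF True that] dist_eq_1_iff[OF assms(1,2)] assms(3,4) by metis
  next
    case False
    then show ?thesis
      using assms(1) unfolding simple_graph_def by auto
  qed
  moreover have "\<not> E u u" and "\<not> E w w"
    using assms(1) unfolding simple_graph_def by auto
  ultimately show ?thesis
    using \<open>u \<noteq> w\<close> unfolding twins_def nbhd_def by (auto; metis)
qed

lemma resolving_if_co_subsingleton:
  assumes "connected_graph V E" and "W \<subseteq> V" and "V - W \<subseteq> {u}"
  shows "resolving V E W"
  unfolding resolving_def
proof (intro conjI assms(2) ballI impI)
  fix y z assume "y \<in> V" and "z \<in> V" and "y \<noteq> z"
  then consider "y \<in> W" | "z \<in> W"
    using assms(3) by blast
  then show "\<exists>x\<in>W. dist E y x \<noteq> dist E z x"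
    by cases (use \<open>y \<in> V\<close> \<open>z \<in> V\<close> \<open>y \<noteq> z\<close> dist_eq_0_iff[OF assms(1)] in metis)+
qed

lemma wtr_set_vertices:
  assumes "connected_graph V E"
  shows "wtr_set V E V"
  unfolding wtr_set_def using resolving_if_co_subsingleton[OF assms] by blast

lemma wtr_set_delete_non_twin:
  assumes "simple_graph V E" and "connected_graph V E" and "u \<in> V" and "\<not> is_twin V E u"
  shows "wtr_set V E (V - {u})"
  unfolding wtr_set_def
proof (intro conjI ballI)
  show "resolving V E (V - {u})"
    using resolving_if_co_subsingleton[OF assms(2)] by blast
next
  fix w x assume "w \<in> V - {u}" and "x \<in> V - (V - {u})"
  then have "x = u" and "w \<in> V" and "w \<noteq> u"
    by auto
  have "\<not> twins E u w"
    using assms(4) \<open>w \<in> V\<close> unfolding is_twin_def by blast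
  then show "\<exists>w'\<in>V - {u} - {w}. dist E x w' \<noteq> dist E w w'"
    using twins_if_same_dist[OF assms(1-3) \<open>w \<in> V\<close>] \<open>w \<noteq> u\<close> \<open>x = u\<close> by blast
qed

lemma wtr_set_eq_vertices_if_all_twins:
  assumes "simple_graph V E" and "connected_graph V E" and "\<forall>u\<in>V. is_twin V E u"
    and W: "wtr_set V E W"
  shows "W = V"
proof (rule ccontr)
  have "W \<subseteq> V"
    using W unfolding wtr_set_def resolving_def by simp
  moreover assume "W \<noteq> V"
  ultimately obtain x where "x \<in> V" and "x \<notin> W"
    by blast
  then obtain v where "v \<in> V" and "twins E x v"
    using assms(3) unfolding is_twin_def by blast
  then have "x \<noteq> v"
    unfolding twins_def by simp
  have same: "dist E x w = dist E v w" if "w \<in> W" and "w \<noteq> v" for w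
    using twins_dist_eq[OF assms(1,2) \<open>x \<in> V\<close> \<open>v \<in> V\<close> _ \<open>twins E x v\<close>] that
      \<open>W \<subseteq> V\<close> \<open>x \<notin> W\<close> by blast
  show False
  proof (cases "v \<in> W")
    case True
    then show False
      using W \<open>x \<in> V\<close> \<open>x \<notin> W\<close> same unfolding wtr_set_def by blast
  next
    case False
    then show False
      using W \<open>x \<in> V\<close> \<open>v \<in> V\<close> \<open>x \<noteq> v\<close> same unfolding wtr_set_def resolving_def by blast
  qed
qed

lemma wt_dim_le: "wtr_set V E W \<Longrightarrow> wt_dim V E \<le> card W"
  unfolding wt_dim_def by (rule Least_le) blast

theorem theorem4:
  fixes V :: "'a set" and E :: "'a \<Rightarrow> 'a \<Rightarrow> bool"
  assumes "simple_graph V E" and "connected_graph V E" and "card V \<ge> 2"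
  shows "wt_dim V E = card V \<longleftrightarrow> (\<forall>u\<in>V. is_twin V E u)"
proof
  assume dim: "wt_dim V E = card V"
  show "\<forall>u\<in>V. is_twin V E u"
  proof (rule ccontr)
    assume "\<not> (\<forall>u\<in>V. is_twin V E u)"
    then obtain u where "u \<in> V" and "\<not> is_twin V E u"
      by blast
    then have "wt_dim V E \<le> card V - 1"
      using wt_dim_le[OF wtr_set_delete_non_twin[OF assms(1,2)]] by simp
    then show False
      using dim assms(3) by linarith
  qed
next
  assume "\<forall>u\<in>V. is_twin V E u"
  then have "(LEAST k. \<exists>W. wtr_set V E W \<and> card W = k) = card V"
    using wtr_set_eq_vertices_if_all_twins[OF assms(1,2)] wtr_set_vertices[OF assms(2)]
    by (intro Least_equality) auto
  then show "wt_dim V E = card V"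
    unfolding wt_dim_def .
qed

end
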